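(* Under the standing assumptions, the following are equivalent: (i) there exists $\mathbf c\in\mathbb R^n$ with all $c_j>0$, $c_1=1$ and $\mathbf c^T(I-M_0)>\mathbf 0^T$ (componentwise strict), i.e. the value-feasible domain $\Theta^{val}$ has nonempty interior; (ii) $\lambda_{\max}(M_0)<1$; (iii) $\lambda_{\max}(\tilde A+BL)<1$. Moreover, with non-strict inequalities: $\Theta^{val}\neq\emptyset$ $\iff$ $\lambda_{\max}(M_0)\le 1$ $\iff$ $\lambda_{\max}(\tilde A+BL)\le 1$.
   Context: Fix $n\ge 2$. $A$ and $K$ are $n\times n$ entrywise nonnegative real matrices; $\delta_1,\dots,\delta_n\in(0,1]$, $D=K\,\mathrm{diag}(\delta_1,\dots,\delta_n)$, and $\tilde A=A+D$. $L=\mathrm{diag}(l_1,\dots,l_n)$ with all $l_j>0$. $B$ is an $n\times n$ entrywise nonnegative matrix with no zero column. Standing assumption: $\tilde A$ is irreducible and $\lambda_{\max}(\tilde A)<1$, where $\lambda_{\max}(X)$ denotes the spectral radius of a square matrix $X$. $M_0:=L(I-\tilde A)^{-1}B$. Vector inequalities are componentwise. The value-feasible domain is $\Theta^{val}:=\{\mathbf c\in\mathbb R^n:\ c_j>0\ \forall j,\ c_1=1,\ \mathbf c^T(I-M_0)\ge \mathbf 0^T\}$. *)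

theory Defs
  imports "Jordan_Normal_Form.Spectral_Radius" "Jordan_Normal_Form.Gauss_Jordan_Elimination"
begin

definition sr :: "real mat \<Rightarrow> real" where
  "sr X = spectral_radius (map_mat complex_of_real X)"

definition nonneg_mat :: "real mat \<Rightarrow> bool" where
  "nonneg_mat X \<longleftrightarrow> (\<forall>i<dim_row X. \<forall>j<dim_col X. X $$ (i,j) \<ge> 0)"

definition irreducible_mat :: "real mat \<Rightarrow> bool" where
  "irreducible_mat X \<longleftrightarrow>
     (\<forall>i<dim_row X. \<forall>j<dim_row X.
        (i,j) \<in> {(a,b). a < dim_row X \<and> b < dim_row X \<and> X $$ (a,b) \<noteq> 0}\<^sup>+)"

definition diag_of :: "nat \<Rightarrow> (nat \<Rightarrow> real) \<Rightarrow> real mat" where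
  "diag_of n d = mat n n (\<lambda>(i,j). if i = j then d i else 0)"

definition M0_of :: "nat \<Rightarrow> real mat \<Rightarrow> real mat \<Rightarrow> real mat \<Rightarrow> real mat" where
  "M0_of n L At B = L * the (mat_inverse (1\<^sub>m n - At)) * B"

(* value-feasible domain; c^T (I - M0) >= 0 written as (I - M0)^T c >= 0; c_1 is index 0 *)
definition Theta_val :: "nat \<Rightarrow> real mat \<Rightarrow> real vec set" where
  "Theta_val n M0 = {c. dim_vec c = n \<and> (\<forall>j<n. c $ j > 0) \<and> c $ 0 = 1 \<and>
      (\<forall>j<n. (transpose_mat (1\<^sub>m n - M0) *\<^sub>v c) $ j \<ge> 0)}"

end

theory Submission
  imports Defs
begin

(*
  Write N = (I - At)^-1. Since At is nonnegative and irreducible with spectral radius below 1,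
  N is entrywise positive: a column x of N satisfies At x <= x, so its negative part y would
  satisfy y <= At y, which a Collatz-Wielandt bound excludes; positivity then spreads along the
  edges of the graph of At. As B has no zero column, M0 = L N B is positive, and by Perron's
  theorem M0^T has a positive eigenvector c for sr M0, normalised to c_1 = 1. It satisfies
  c^T (I - M0) = (1 - sr M0) c^T, which gives (ii) => (i) and its non-strict analogue; the
  converses are again Collatz-Wielandt bounds. Finally the positive vector x^T = c^T L N satisfies
  x^T (At + B L) = x^T + (sr M0 - 1) c^T L, so sr (At + B L) lies on the same side of 1 as sr M0.
*)

abbreviation of_real_mat :: "real mat \<Rightarrow> complex mat" where
  "of_real_mat X \<equiv> map_mat complex_of_real X"

lemma index_mult_mat_vec_sum:
  assumes "X \<in> carrier_mat m n" "v \<in> carrier_vec n" "i < m"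
  shows "(X *\<^sub>v v) $ i = (\<Sum>k<n. X $$ (i,k) * v $ k)"
  using assms by (auto simp: scalar_prod_def lessThan_atLeast0 intro!: sum.cong)

lemma index_mult_mat_sum:
  assumes "X \<in> carrier_mat m n" "Y \<in> carrier_mat n p" "i < m" "j < p"
  shows "(X * Y) $$ (i,j) = (\<Sum>k<n. X $$ (i,k) * Y $$ (k,j))"
  using assms by (auto simp: scalar_prod_def lessThan_atLeast0 intro!: sum.cong)

lemma nonzero_vec_index:
  assumes "v \<in> carrier_vec n" "v \<noteq> 0\<^sub>v n"
  obtains i where "i < n" "v $ i \<noteq> 0"
  using assms by (metis carrier_vecD eq_vecI index_zero_vec(1,2))

lemma less_eq_vec_iff:
  assumes "x \<in> carrier_vec n" "y \<in> carrier_vec n"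
  shows "x \<le> y \<longleftrightarrow> (\<forall>i<n. x $ i \<le> y $ i)"
  using assms unfolding less_eq_vec_def by auto

lemma smult_mult_mat_vec:
  assumes "A \<in> carrier_mat m n" "v \<in> carrier_vec n"
  shows "(c \<cdot>\<^sub>m A) *\<^sub>v v = c \<cdot>\<^sub>v (A *\<^sub>v v)"
  by (rule eq_vecI) (use assms in \<open>auto simp: scalar_prod_def sum_distrib_left mult.assoc\<close>)

lemma smult_pow_mat:
  fixes X :: "'a :: comm_semiring_1 mat"
  assumes X: "X \<in> carrier_mat n n"
  shows "(c \<cdot>\<^sub>m X) ^\<^sub>m k = c ^ k \<cdot>\<^sub>m X ^\<^sub>m k"
proof (induct k)
  case (Suc k)
  have P: "X ^\<^sub>m k \<in> carrier_mat n n" using X by simp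
  have "(c ^ k \<cdot>\<^sub>m X ^\<^sub>m k) * (c \<cdot>\<^sub>m X) = c ^ k \<cdot>\<^sub>m (c \<cdot>\<^sub>m (X ^\<^sub>m k * X))"
    using mult_smult_assoc_mat[OF P, of "c \<cdot>\<^sub>m X" n] mult_smult_distrib[OF P X] X by simp
  then show ?case
    using Suc by (auto intro!: eq_matI simp: mult_ac)
qed (use X in \<open>auto intro!: eq_matI\<close>)

lemma diag_of_carrier [simp]: "diag_of n d \<in> carrier_mat n n"
  by (simp add: diag_of_def)

lemma diag_of_eq_mat_diag: "diag_of n d = mat_diag n d"
  unfolding diag_of_def mat_diag_def by (auto intro!: eq_matI)

lemma diag_of_mult_vec_index:
  assumes v: "v \<in> carrier_vec n" and j: "j < n"
  shows "(diag_of n d *\<^sub>v v) $ j = d j * v $ j"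
proof -
  have "(diag_of n d *\<^sub>v v) $ j = (\<Sum>k<n. diag_of n d $$ (j,k) * v $ k)"
    by (rule index_mult_mat_vec_sum[OF diag_of_carrier v j])
  also have "\<dots> = (\<Sum>k<n. if k = j then d j * v $ j else 0)"
    by (rule sum.cong) (auto simp: diag_of_def j)
  finally show ?thesis using j by simp
qed

lemma transpose_diag_of: "transpose_mat (diag_of n d) = diag_of n d"
  unfolding diag_of_def by (auto intro!: eq_matI)

lemma sr_eigenvector:
  assumes X: "X \<in> carrier_mat n n" and n: "n > 0"
  obtains \<mu> v where "eigenvector (of_real_mat X) v \<mu>" "cmod \<mu> = sr X"
proof -
  have "of_real_mat X \<in> carrier_mat n n" using X by simp
  from spectral_radius_mem_max(1)[OF this n] obtain \<mu>
    where "\<mu> \<in> spectrum (of_real_mat X)" "cmod \<mu> = sr X" by (auto simp: sr_def)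
  then show ?thesis using that unfolding spectrum_def eigenvalue_def by auto
qed

lemma eigenvalue_norm_le_sr:
  assumes X: "X \<in> carrier_mat n n" and ev: "eigenvector (of_real_mat X) v \<mu>"
  shows "cmod \<mu> \<le> sr X"
proof -
  have cX: "of_real_mat X \<in> carrier_mat n n" using X by simp
  have "eigenvalue (of_real_mat X) \<mu>" using ev unfolding eigenvalue_def by auto
  with eigenvalue_imp_nonzero_dim[OF cX] have "n > 0" by simp
  then show ?thesis unfolding sr_def
    by (rule spectral_radius_mem_max(2)[OF cX]) (use \<open>eigenvalue _ \<mu>\<close> in \<open>auto simp: spectrum_def\<close>)
qed

lemma sr_nonneg:
  assumes "X \<in> carrier_mat n n" "n > 0"
  shows "0 \<le> sr X"
  by (metis sr_eigenvector[OF assms] norm_ge_zero)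

lemma sr_transpose:
  assumes X: "X \<in> carrier_mat n n"
  shows "sr (transpose_mat X) = sr X"
proof -
  have cX: "of_real_mat X \<in> carrier_mat n n" using X by simp
  have "of_real_mat (transpose_mat X) = transpose_mat (of_real_mat X)"
    by (simp add: map_mat_transpose)
  moreover have cXT: "of_real_mat (transpose_mat X) \<in> carrier_mat n n" using X by simp
  ultimately have "spectrum (of_real_mat (transpose_mat X)) = spectrum (of_real_mat X)"
    using spectrum_root_char_poly[OF cXT] spectrum_root_char_poly[OF cX]
      char_poly_transpose_mat[OF cX] by simp
  then show ?thesis unfolding sr_def spectral_radius_def by simp
qed

lemma sr_smult_ge:
  assumes X: "X \<in> carrier_mat n n" and n: "n > 0" and t: "t > 0"
  shows "t * sr X \<le> sr (t \<cdot>\<^sub>m X)"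
proof -
  obtain \<mu> v where ev: "eigenvector (of_real_mat X) v \<mu>" and \<mu>: "cmod \<mu> = sr X"
    using sr_eigenvector[OF X n] .
  have v: "v \<in> carrier_vec n" "of_real_mat X *\<^sub>v v = \<mu> \<cdot>\<^sub>v v"
    using ev X unfolding eigenvector_def by auto
  have "of_real_mat (t \<cdot>\<^sub>m X) = complex_of_real t \<cdot>\<^sub>m of_real_mat X"
    by (auto intro!: eq_matI)
  then have "of_real_mat (t \<cdot>\<^sub>m X) *\<^sub>v v = (complex_of_real t * \<mu>) \<cdot>\<^sub>v v"
    using v X by (simp add: smult_mult_mat_vec[of _ n n] smult_smult_assoc)
  with ev X have "eigenvector (of_real_mat (t \<cdot>\<^sub>m X)) v (complex_of_real t * \<mu>)"
    unfolding eigenvector_def by simp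
  from eigenvalue_norm_le_sr[OF _ this, of n] X show ?thesis
    using t \<mu> by (simp add: norm_mult)
qed

lemma sr_smult:
  assumes X: "X \<in> carrier_mat n n" and n: "n > 0" and t: "t > 0"
  shows "sr (t \<cdot>\<^sub>m X) = t * sr X"
proof -
  have "(1 / t) * sr (t \<cdot>\<^sub>m X) \<le> sr ((1 / t) \<cdot>\<^sub>m (t \<cdot>\<^sub>m X))"
    by (rule sr_smult_ge) (use X n t in auto)
  also have "(1 / t) \<cdot>\<^sub>m (t \<cdot>\<^sub>m X) = X"
    using t by (auto intro!: eq_matI)
  finally show ?thesis
    using sr_smult_ge[OF X n t] t by (simp add: field_simps)
qed

lemma sr_le_of_pow_bound:
  assumes X: "X \<in> carrier_mat n n" and n: "n > 0" and s: "s > 0"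
    and bound: "\<And>k i j. i < n \<Longrightarrow> j < n \<Longrightarrow> \<bar>(X ^\<^sub>m k) $$ (i,j)\<bar> \<le> C * s ^ k"
  shows "sr X \<le> s"
proof (rule ccontr)
  assume "\<not> sr X \<le> s"
  obtain \<mu> v where ev: "eigenvector (of_real_mat X) v \<mu>" and \<mu>: "cmod \<mu> = sr X"
    using sr_eigenvector[OF X n] .
  have v: "v \<in> carrier_vec n" "v \<noteq> 0\<^sub>v n"
    using ev X unfolding eigenvector_def by auto
  then obtain i where i: "i < n" "v $ i \<noteq> 0" by (rule nonzero_vec_index)
  define S where "S = (\<Sum>j<n. cmod (v $ j))"
  have growth: "cmod \<mu> ^ k * cmod (v $ i) \<le> C * S * s ^ k" for k
  proof -
    have "of_real_mat (X ^\<^sub>m k) *\<^sub>v v = \<mu> ^ k \<cdot>\<^sub>v v"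
      using eigenvector_pow[OF _ ev] X by (simp add: of_real_hom.mat_hom_pow[OF X, symmetric])
    then have eq: "\<mu> ^ k * v $ i = (\<Sum>j<n. of_real ((X ^\<^sub>m k) $$ (i,j)) * v $ j)"
      using index_mult_mat_vec_sum[OF _ v(1) i(1), of "of_real_mat (X ^\<^sub>m k)"] X v i
      by simp
    have "cmod \<mu> ^ k * cmod (v $ i) = cmod (\<mu> ^ k * v $ i)"
      by (simp add: norm_mult norm_power)
    also have "\<dots> \<le> (\<Sum>j<n. cmod (of_real ((X ^\<^sub>m k) $$ (i,j)) * v $ j))"
      unfolding eq by (rule norm_sum)
    also have "\<dots> = (\<Sum>j<n. \<bar>(X ^\<^sub>m k) $$ (i,j)\<bar> * cmod (v $ j))"
      by (simp add: norm_mult)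
    also have "\<dots> \<le> (\<Sum>j<n. C * s ^ k * cmod (v $ j))"
      by (intro sum_mono mult_right_mono) (use bound i in auto)
    also have "\<dots> = C * S * s ^ k"
      by (simp add: S_def sum_distrib_left mult_ac)
    finally show ?thesis .
  qed
  have vi: "cmod (v $ i) > 0" using i by simp
  have "1 < cmod \<mu> / s" using \<open>\<not> sr X \<le> s\<close> \<mu> s by simp
  from real_arch_pow[OF this] obtain k where "C * S / cmod (v $ i) < (cmod \<mu> / s) ^ k"
    by blast
  then have "C * S * s ^ k < cmod \<mu> ^ k * cmod (v $ i)"
    using vi s by (simp add: power_divide field_simps)
  with growth[of k] show False by simp
qed

(* The library bounds the powers only when sr < 1; rescaling by s gives the geometric bound. *)
lemma pow_bound_of_sr_less:
  assumes X: "X \<in> carrier_mat n n" and n: "n > 0" and lt: "sr X < s"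
  obtains C where "\<And>k i j. i < n \<Longrightarrow> j < n \<Longrightarrow> \<bar>(X ^\<^sub>m k) $$ (i,j)\<bar> \<le> C * s ^ k"
proof -
  have s: "s > 0" using sr_nonneg[OF X n] lt by simp
  define Y where "Y = (1 / s) \<cdot>\<^sub>m X"
  have Y: "Y \<in> carrier_mat n n" using X by (simp add: Y_def)
  have "sr Y = sr X / s" using sr_smult[OF X n, of "1 / s"] s by (simp add: Y_def)
  then have "sr Y < 1" using lt s by simp
  then obtain C where C: "\<And>k. norm_bound (of_real_mat Y ^\<^sub>m k) C"
    using spectral_radius_jnf_norm_bound_less_1_upper_triangular[of "of_real_mat Y" n] Y
    unfolding sr_def by auto
  have "\<bar>(X ^\<^sub>m k) $$ (i,j)\<bar> \<le> C * s ^ k" if ij: "i < n" "j < n" for k i j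
  proof -
    have "X = s \<cdot>\<^sub>m Y" using s X by (auto simp: Y_def intro!: eq_matI)
    then have "(X ^\<^sub>m k) $$ (i,j) = s ^ k * (Y ^\<^sub>m k) $$ (i,j)"
      using smult_pow_mat[OF Y] ij Y by simp
    moreover have "\<bar>(Y ^\<^sub>m k) $$ (i,j)\<bar> \<le> C"
    proof -
      have "norm ((of_real_mat Y ^\<^sub>m k) $$ (i,j)) \<le> C"
        using C[of k] ij Y unfolding norm_bound_def by simp
      then show ?thesis
        by (simp add: of_real_hom.mat_hom_pow[OF Y, symmetric] ij Y[THEN carrier_matD(1)]
            Y[THEN carrier_matD(2)])
    qed
    ultimately show ?thesis
      using s by (simp add: abs_mult mult_left_mono mult.commute)
  qed
  then show ?thesis using that by blast
qed

section \<open>Nonnegative matrices and Collatz--Wielandt bounds\<close>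

lemma nonneg_matD:
  assumes "nonneg_mat X" "X \<in> carrier_mat m n" "i < m" "j < n"
  shows "0 \<le> X $$ (i,j)"
  using assms unfolding nonneg_mat_def by auto

lemma nonneg_mat_mult:
  assumes X: "X \<in> carrier_mat m n" and Y: "Y \<in> carrier_mat n p"
    and "nonneg_mat X" "nonneg_mat Y"
  shows "nonneg_mat (X * Y)"
  unfolding nonneg_mat_def
proof (intro allI impI)
  fix i j assume "i < dim_row (X * Y)" "j < dim_col (X * Y)"
  then have ij: "i < m" "j < p" using X Y by auto
  show "0 \<le> (X * Y) $$ (i,j)"
    by (subst index_mult_mat_sum[OF X Y ij])
      (use assms ij in \<open>auto simp: nonneg_mat_def intro!: sum_nonneg\<close>)
qed

lemma nonneg_mat_add:
  assumes "X \<in> carrier_mat m n" "Y \<in> carrier_mat m n" "nonneg_mat X" "nonneg_mat Y"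
  shows "nonneg_mat (X + Y)"
  using assms unfolding nonneg_mat_def by auto

lemma nonneg_mat_diag_of:
  assumes "\<forall>i<n. 0 \<le> d i"
  shows "nonneg_mat (diag_of n d)"
  using assms unfolding nonneg_mat_def diag_of_def by auto

lemma nonneg_mat_transpose:
  assumes "X \<in> carrier_mat n n" "nonneg_mat X"
  shows "nonneg_mat (transpose_mat X)"
  using assms unfolding nonneg_mat_def by auto

lemma nonneg_mat_pow:
  assumes X: "X \<in> carrier_mat n n" and nn: "nonneg_mat X"
  shows "nonneg_mat (X ^\<^sub>m k)"
proof (induct k)
  case 0
  then show ?case by (auto simp: nonneg_mat_def)
next
  case (Suc k)
  then show ?case using nonneg_mat_mult[OF pow_carrier_mat[OF X] X _ nn] by simp
qed

lemma nonneg_mat_mult_vec_mono: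
  assumes X: "X \<in> carrier_mat n n" and nn: "nonneg_mat X" and le: "y \<le> z" and z: "z \<in> carrier_vec n"
  shows "X *\<^sub>v y \<le> X *\<^sub>v z"
proof -
  have y: "y \<in> carrier_vec n" using le z unfolding less_eq_vec_def carrier_vec_def by simp
  have "(X *\<^sub>v y) $ i \<le> (X *\<^sub>v z) $ i" if i: "i < n" for i
  proof -
    have "(X *\<^sub>v y) $ i = (\<Sum>k<n. X $$ (i,k) * y $ k)" by (rule index_mult_mat_vec_sum[OF X y i])
    also have "\<dots> \<le> (\<Sum>k<n. X $$ (i,k) * z $ k)"
    proof (intro sum_mono mult_left_mono)
      fix k assume "k \<in> {..<n}"
      then show "y $ k \<le> z $ k" "0 \<le> X $$ (i,k)"
        using le z y nn X i by (auto simp: less_eq_vec_iff nonneg_mat_def)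
    qed
    also have "\<dots> = (X *\<^sub>v z) $ i" by (rule index_mult_mat_vec_sum[OF X z i, symmetric])
    finally show ?thesis .
  qed
  then show ?thesis using X y z by (simp add: less_eq_vec_iff[of _ n])
qed

lemma smult_vec_mono:
  fixes y z :: "real vec"
  assumes c: "0 \<le> c" and le: "y \<le> z"
  shows "c \<cdot>\<^sub>v y \<le> c \<cdot>\<^sub>v z"
  using le mult_left_mono[OF _ c] unfolding less_eq_vec_def by simp

lemma nonneg_mat_pow_mult_vec_le:
  assumes X: "X \<in> carrier_mat n n" and nn: "nonneg_mat X" and x: "x \<in> carrier_vec n"
    and s: "0 \<le> s" and le: "X *\<^sub>v x \<le> s \<cdot>\<^sub>v x"
  shows "X ^\<^sub>m k *\<^sub>v x \<le> s ^ k \<cdot>\<^sub>v x"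
proof (induct k)
  case (Suc k)
  have Xk: "X ^\<^sub>m k \<in> carrier_mat n n" using X by simp
  have "X ^\<^sub>m Suc k *\<^sub>v x = X ^\<^sub>m k *\<^sub>v (X *\<^sub>v x)" using assoc_mult_mat_vec[OF Xk X x] by simp
  also have "\<dots> \<le> X ^\<^sub>m k *\<^sub>v (s \<cdot>\<^sub>v x)"
    by (rule nonneg_mat_mult_vec_mono[OF Xk nonneg_mat_pow[OF X nn] le]) (use x in simp)
  also have "\<dots> = s \<cdot>\<^sub>v (X ^\<^sub>m k *\<^sub>v x)" using mult_mat_vec[OF Xk x] .
  also have "\<dots> \<le> s \<cdot>\<^sub>v (s ^ k \<cdot>\<^sub>v x)" by (rule smult_vec_mono[OF s Suc])
  also have "\<dots> = s ^ Suc k \<cdot>\<^sub>v x" by (simp add: smult_smult_assoc)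
  finally show ?case .
qed (use X x in simp)

lemma nonneg_mat_pow_mult_vec_ge:
  assumes X: "X \<in> carrier_mat n n" and nn: "nonneg_mat X" and x: "x \<in> carrier_vec n"
    and s: "0 \<le> s" and ge: "s \<cdot>\<^sub>v x \<le> X *\<^sub>v x"
  shows "s ^ k \<cdot>\<^sub>v x \<le> X ^\<^sub>m k *\<^sub>v x"
proof (induct k)
  case (Suc k)
  have Xk: "X ^\<^sub>m k \<in> carrier_mat n n" using X by simp
  have "s ^ Suc k \<cdot>\<^sub>v x = s \<cdot>\<^sub>v (s ^ k \<cdot>\<^sub>v x)" by (simp add: smult_smult_assoc)
  also have "\<dots> \<le> s \<cdot>\<^sub>v (X ^\<^sub>m k *\<^sub>v x)" by (rule smult_vec_mono[OF s Suc])
  also have "\<dots> = X ^\<^sub>m k *\<^sub>v (s \<cdot>\<^sub>v x)" using mult_mat_vec[OF Xk x] by simp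
  also have "\<dots> \<le> X ^\<^sub>m k *\<^sub>v (X *\<^sub>v x)"
    by (rule nonneg_mat_mult_vec_mono[OF Xk nonneg_mat_pow[OF X nn] ge]) (use X x in simp)
  also have "\<dots> = X ^\<^sub>m Suc k *\<^sub>v x" using assoc_mult_mat_vec[OF Xk X x] by simp
  finally show ?case .
qed (use X x in simp)

lemma sr_le_of_mult_vec_le:
  assumes X: "X \<in> carrier_mat n n" and nn: "nonneg_mat X" and n: "n > 0"
    and x: "x \<in> carrier_vec n" and xpos: "\<forall>i<n. 0 < x $ i"
    and s: "s > 0" and le: "X *\<^sub>v x \<le> s \<cdot>\<^sub>v x"
  shows "sr X \<le> s"
proof (rule sr_le_of_pow_bound[OF X n s])
  define C where "C = (\<Sum>i<n. x $ i) * (\<Sum>j<n. 1 / x $ j)"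
  fix k i j assume i: "i < n" and j: "j < n"
  have Xk: "X ^\<^sub>m k \<in> carrier_mat n n" "nonneg_mat (X ^\<^sub>m k)"
    using X nonneg_mat_pow[OF X nn] by auto
  then have nnk: "0 \<le> (X ^\<^sub>m k) $$ (a,b)" if "a < n" "b < n" for a b
    using that X unfolding nonneg_mat_def by auto
  have "(X ^\<^sub>m k) $$ (i,j) * x $ j \<le> (\<Sum>l<n. (X ^\<^sub>m k) $$ (i,l) * x $ l)"
    by (rule member_le_sum) (use j nnk[OF i] xpos in \<open>auto intro: less_imp_le\<close>)
  also have "\<dots> = (X ^\<^sub>m k *\<^sub>v x) $ i" by (rule index_mult_mat_vec_sum[OF Xk(1) x i, symmetric])
  also have "\<dots> \<le> s ^ k * x $ i"
    using nonneg_mat_pow_mult_vec_le[OF X nn x _ le, of k] s i x Xk(1)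
    by (auto simp: less_eq_vec_iff[of _ n])
  finally have "(X ^\<^sub>m k) $$ (i,j) \<le> s ^ k * (x $ i * (1 / x $ j))"
    using xpos j by (simp add: le_divide_eq)
  moreover have "x $ i * (1 / x $ j) \<le> C"
    unfolding C_def
    by (intro mult_mono member_le_sum sum_nonneg) (use xpos i j in \<open>auto intro: less_imp_le\<close>)
  ultimately have "(X ^\<^sub>m k) $$ (i,j) \<le> s ^ k * C"
    using s by (smt (verit) mult_left_mono zero_le_power)
  then show "\<bar>(X ^\<^sub>m k) $$ (i,j)\<bar> \<le> C * s ^ k"
    using nnk[OF i j] by (simp add: mult.commute)
qed

lemma sr_ge_of_mult_vec_ge:
  assumes X: "X \<in> carrier_mat n n" and nn: "nonneg_mat X"
    and x: "x \<in> carrier_vec n" and xnn: "\<forall>i<n. 0 \<le> x $ i" and i: "i < n" "0 < x $ i"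
    and ge: "\<sigma> \<cdot>\<^sub>v x \<le> X *\<^sub>v x"
  shows "\<sigma> \<le> sr X"
proof (rule ccontr)
  assume "\<not> \<sigma> \<le> sr X"
  have n: "n > 0" using i by simp
  have \<sigma>: "sr X < \<sigma>" "0 < \<sigma>" using \<open>\<not> \<sigma> \<le> sr X\<close> sr_nonneg[OF X n] by auto
  define s where "s = (sr X + \<sigma>) / 2"
  have s: "sr X < s" "0 < s" "1 < \<sigma> / s"
    using \<sigma> sr_nonneg[OF X n] by (auto simp: s_def field_simps)
  obtain C where C: "\<And>k a b. a < n \<Longrightarrow> b < n \<Longrightarrow> \<bar>(X ^\<^sub>m k) $$ (a,b)\<bar> \<le> C * s ^ k"
    using pow_bound_of_sr_less[OF X n s(1)] by blast
  define S where "S = (\<Sum>j<n. x $ j)"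
  have growth: "\<sigma> ^ k * x $ i \<le> C * S * s ^ k" for k
  proof -
    have Xk: "X ^\<^sub>m k \<in> carrier_mat n n" using X by simp
    have "\<sigma> ^ k * x $ i \<le> (X ^\<^sub>m k *\<^sub>v x) $ i"
      using nonneg_mat_pow_mult_vec_ge[OF X nn x _ ge, of k] \<sigma> i x Xk
      by (auto simp: less_eq_vec_iff[of _ n])
    also have "\<dots> = (\<Sum>j<n. (X ^\<^sub>m k) $$ (i,j) * x $ j)"
      by (rule index_mult_mat_vec_sum[OF Xk x i(1)])
    also have "\<dots> \<le> (\<Sum>j<n. C * s ^ k * x $ j)"
      by (intro sum_mono mult_right_mono) (use C[of i] i xnn in \<open>auto simp: abs_le_iff\<close>)
    also have "\<dots> = C * S * s ^ k" by (simp add: S_def sum_distrib_left mult_ac)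
    finally show ?thesis .
  qed
  from real_arch_pow[OF s(3)] obtain k where "C * S / x $ i < (\<sigma> / s) ^ k" by blast
  then have "C * S * s ^ k < \<sigma> ^ k * x $ i"
    using i s by (simp add: power_divide field_simps)
  with growth[of k] show False by simp
qed

lemma ex_pos_lower_bound:
  fixes f :: "nat \<Rightarrow> real"
  assumes "\<forall>i<n. 0 < f i"
  obtains e where "0 < e" "\<forall>i<n. e \<le> f i"
proof -
  have "\<exists>e>0. \<forall>i<n. e \<le> f i"
    using assms
  proof (induct n)
    case (Suc n)
    then obtain e where "e > 0" "\<forall>i<n. e \<le> f i" by auto
    then show ?case
      using Suc.prems by (intro exI[of _ "min e (f n)"]) (auto simp: less_Suc_eq)
  qed (auto intro: exI[of _ 1])
  then show ?thesis using that by blast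
qed

lemma sr_less_of_mult_vec_less:
  assumes X: "X \<in> carrier_mat n n" and nn: "nonneg_mat X" and n: "n > 0"
    and x: "x \<in> carrier_vec n" and xpos: "\<forall>i<n. 0 < x $ i"
    and s: "s > 0" and lt: "\<forall>i<n. (X *\<^sub>v x) $ i < s * x $ i"
  shows "sr X < s"
proof -
  have "\<forall>i<n. 0 < (s * x $ i - (X *\<^sub>v x) $ i) / x $ i" using lt xpos by simp
  then obtain e where e: "0 < e" "\<forall>i<n. e \<le> (s * x $ i - (X *\<^sub>v x) $ i) / x $ i"
    by (rule ex_pos_lower_bound)
  define s' where "s' = s - min e (s / 2)"
  have s': "0 < s'" "s' < s" using e s by (simp_all add: s'_def)
  have "(X *\<^sub>v x) $ i \<le> s' * x $ i" if i: "i < n" for i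
  proof -
    have "min e (s / 2) * x $ i \<le> e * x $ i"
      by (rule mult_right_mono) (use xpos i in auto)
    also have "\<dots> \<le> s * x $ i - (X *\<^sub>v x) $ i"
      using e(2) xpos i by (simp add: pos_le_divide_eq)
    finally show ?thesis by (simp add: s'_def left_diff_distrib)
  qed
  then have "X *\<^sub>v x \<le> s' \<cdot>\<^sub>v x" using X x by (simp add: less_eq_vec_iff[of _ n])
  from sr_le_of_mult_vec_le[OF X nn n x xpos s'(1) this] s'(2) show ?thesis by simp
qed

lemma sr_greater_of_mult_vec_greater:
  assumes X: "X \<in> carrier_mat n n" and nn: "nonneg_mat X" and n: "n > 0"
    and x: "x \<in> carrier_vec n" and xpos: "\<forall>i<n. 0 < x $ i"
    and gt: "\<forall>i<n. \<sigma> * x $ i < (X *\<^sub>v x) $ i"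
  shows "\<sigma> < sr X"
proof -
  have "\<forall>i<n. 0 < ((X *\<^sub>v x) $ i - \<sigma> * x $ i) / x $ i" using gt xpos by simp
  then obtain e where e: "0 < e" "\<forall>i<n. e \<le> ((X *\<^sub>v x) $ i - \<sigma> * x $ i) / x $ i"
    by (rule ex_pos_lower_bound)
  have "(\<sigma> + e) * x $ i \<le> (X *\<^sub>v x) $ i" if i: "i < n" for i
    using e(2) xpos i by (simp add: pos_le_divide_eq algebra_simps)
  then have "(\<sigma> + e) \<cdot>\<^sub>v x \<le> X *\<^sub>v x" using X x by (simp add: less_eq_vec_iff[of _ n])
  moreover have "\<forall>i<n. 0 \<le> x $ i" using xpos by (simp add: less_imp_le)
  ultimately have "\<sigma> + e \<le> sr X"
    using sr_ge_of_mult_vec_ge[OF X nn x _ n] xpos n by blast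
  with e(1) show ?thesis by simp
qed

lemma sr_compare_one_of_mult_vec_shift:
  assumes X: "X \<in> carrier_mat n n" and nn: "nonneg_mat X" and n: "n > 0"
    and x: "x \<in> carrier_vec n" "\<forall>j<n. 0 < x $ j" and p: "\<forall>j<n. 0 < p j"
    and shift: "\<forall>j<n. (X *\<^sub>v x) $ j = x $ j + (r - 1) * p j"
  shows "(r < 1 \<longleftrightarrow> sr X < 1) \<and> (r \<le> 1 \<longleftrightarrow> sr X \<le> 1)"
proof (intro conjI iffI)
  assume "r < 1"
  then have "\<forall>j<n. (X *\<^sub>v x) $ j < 1 * x $ j" using shift p by (simp add: mult_neg_pos)
  from sr_less_of_mult_vec_less[OF X nn n x _ this] show "sr X < 1" by simp
next
  assume "sr X < 1"
  show "r < 1"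
  proof (rule ccontr)
    assume "\<not> r < 1"
    then have "\<forall>j<n. 1 * x $ j \<le> (X *\<^sub>v x) $ j" using shift p by (simp add: less_imp_le)
    then have "1 \<cdot>\<^sub>v x \<le> X *\<^sub>v x" using X x(1) by (simp add: less_eq_vec_iff[of _ n])
    from sr_ge_of_mult_vec_ge[OF X nn x(1) _ n _ this] x(2) n \<open>sr X < 1\<close>
    show False by (auto intro: less_imp_le)
  qed
next
  assume "r \<le> 1"
  then have "\<forall>j<n. (X *\<^sub>v x) $ j \<le> 1 * x $ j"
    using shift p by (simp add: mult_nonpos_nonneg less_imp_le)
  then have "X *\<^sub>v x \<le> 1 \<cdot>\<^sub>v x" using X x(1) by (simp add: less_eq_vec_iff[of _ n])
  from sr_le_of_mult_vec_le[OF X nn n x _ this] show "sr X \<le> 1" by simp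
next
  assume "sr X \<le> 1"
  show "r \<le> 1"
  proof (rule ccontr)
    assume "\<not> r \<le> 1"
    then have "\<forall>j<n. 1 * x $ j < (X *\<^sub>v x) $ j" using shift p by simp
    from sr_greater_of_mult_vec_greater[OF X nn n x this] \<open>sr X \<le> 1\<close> show False by simp
  qed
qed

section \<open>Perron vectors of positive matrices\<close>

lemma positive_mat_mult_vec_pos:
  fixes X :: "real mat"
  assumes X: "X \<in> carrier_mat n n" and pos: "\<forall>i<n. \<forall>j<n. 0 < X $$ (i,j)"
    and x: "x \<in> carrier_vec n" and xnn: "\<forall>j<n. 0 \<le> x $ j" and k: "k < n" "0 < x $ k"
    and i: "i < n"
  shows "0 < (X *\<^sub>v x) $ i"
proof -
  have "0 < X $$ (i,k) * x $ k" using pos i k by simp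
  also have "\<dots> \<le> (\<Sum>j<n. X $$ (i,j) * x $ j)"
    by (rule member_le_sum) (use k pos i xnn in \<open>auto intro!: mult_nonneg_nonneg simp: less_imp_le\<close>)
  also have "\<dots> = (X *\<^sub>v x) $ i" by (rule index_mult_mat_vec_sum[OF X x i, symmetric])
  finally show ?thesis .
qed

lemma eigenvector_norm_subinvariant:
  assumes X: "X \<in> carrier_mat n n" and nn: "nonneg_mat X"
    and ev: "eigenvector (of_real_mat X) v \<mu>"
  shows "cmod \<mu> \<cdot>\<^sub>v vec n (\<lambda>i. cmod (v $ i)) \<le> X *\<^sub>v vec n (\<lambda>i. cmod (v $ i))"
proof -
  define u where "u = vec n (\<lambda>i. cmod (v $ i))"
  have v: "v \<in> carrier_vec n" "of_real_mat X *\<^sub>v v = \<mu> \<cdot>\<^sub>v v"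
    using ev X unfolding eigenvector_def by auto
  have u: "u \<in> carrier_vec n" by (simp add: u_def)
  have "cmod \<mu> * u $ i \<le> (X *\<^sub>v u) $ i" if i: "i < n" for i
  proof -
    have eq: "\<mu> * v $ i = (\<Sum>j<n. of_real (X $$ (i,j)) * v $ j)"
      using index_mult_mat_vec_sum[OF _ v(1) i, of "of_real_mat X"] v X i by simp
    have "cmod \<mu> * u $ i = cmod (\<mu> * v $ i)" using i by (simp add: u_def norm_mult)
    also have "\<dots> \<le> (\<Sum>j<n. cmod (of_real (X $$ (i,j)) * v $ j))"
      unfolding eq by (rule norm_sum)
    also have "\<dots> = (\<Sum>j<n. X $$ (i,j) * u $ j)"
      using nn X i by (intro sum.cong) (auto simp: u_def norm_mult nonneg_mat_def)
    also have "\<dots> = (X *\<^sub>v u) $ i" by (rule index_mult_mat_vec_sum[OF X u i, symmetric])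
    finally show ?thesis .
  qed
  then show ?thesis
    using X u unfolding u_def[symmetric] by (simp add: less_eq_vec_iff[of _ n])
qed

lemma positive_mat_subinvariant_eq:
  assumes Y: "Y \<in> carrier_mat n n" and pos: "\<forall>i<n. \<forall>j<n. 0 < Y $$ (i,j)"
    and u: "u \<in> carrier_vec n" "\<forall>j<n. 0 \<le> u $ j" and k: "k < n" "0 < u $ k"
    and sub: "sr Y \<cdot>\<^sub>v u \<le> Y *\<^sub>v u"
  shows "Y *\<^sub>v u = sr Y \<cdot>\<^sub>v u"
proof (rule ccontr)
  assume ne: "Y *\<^sub>v u \<noteq> sr Y \<cdot>\<^sub>v u"
  \<comment> \<open>then w = Y u is strictly superinvariant, contradicting the maximality of sr Y\<close>
  have n: "n > 0" using k by simp
  have nn: "nonneg_mat Y" using pos Y by (auto simp: nonneg_mat_def less_imp_le)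
  define w where "w = Y *\<^sub>v u"
  define d where "d = w - sr Y \<cdot>\<^sub>v u"
  have w: "w \<in> carrier_vec n" "\<forall>i<n. 0 < w $ i"
    using Y u positive_mat_mult_vec_pos[OF Y pos u k] by (auto simp: w_def)
  have d: "d \<in> carrier_vec n" "\<forall>j<n. 0 \<le> d $ j"
    using sub Y u by (auto simp: d_def w_def less_eq_vec_iff[of _ n])
  obtain i1 where i1: "i1 < n" "0 < d $ i1"
  proof -
    have "\<exists>i<n. d $ i \<noteq> 0"
    proof (rule ccontr)
      assume "\<not> (\<exists>i<n. d $ i \<noteq> 0)"
      then have "Y *\<^sub>v u = sr Y \<cdot>\<^sub>v u" using Y u by (intro eq_vecI) (auto simp: d_def w_def)
      with ne show False ..
    qed
    then show ?thesis using that d(2) by (auto simp: order_le_less)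
  qed
  have "Y *\<^sub>v d = Y *\<^sub>v w - sr Y \<cdot>\<^sub>v w"
    using mult_minus_distrib_mat_vec[OF Y w(1)] mult_mat_vec[OF Y u(1)] u(1)
    by (simp add: d_def w_def)
  then have "\<forall>i<n. sr Y * w $ i < (Y *\<^sub>v w) $ i"
    using positive_mat_mult_vec_pos[OF Y pos d(1) d(2) i1] Y w(1) by auto
  from sr_greater_of_mult_vec_greater[OF Y nn n w(1) w(2) this] show False by simp
qed

lemma perron_vector_positive_mat:
  assumes Y: "Y \<in> carrier_mat n n" and n: "n > 0" and pos: "\<forall>i<n. \<forall>j<n. 0 < Y $$ (i,j)"
  obtains u where "u \<in> carrier_vec n" "\<forall>i<n. 0 < u $ i" "Y *\<^sub>v u = sr Y \<cdot>\<^sub>v u"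
proof -
  have nn: "nonneg_mat Y" using pos Y by (auto simp: nonneg_mat_def less_imp_le)
  obtain \<mu> v where ev: "eigenvector (of_real_mat Y) v \<mu>" and \<mu>: "cmod \<mu> = sr Y"
    using sr_eigenvector[OF Y n] .
  define u where "u = vec n (\<lambda>i. cmod (v $ i))"
  have u: "u \<in> carrier_vec n" "\<forall>j<n. 0 \<le> u $ j" by (auto simp: u_def)
  have "v \<in> carrier_vec n" "v \<noteq> 0\<^sub>v n" using ev Y unfolding eigenvector_def by auto
  then obtain k where k: "k < n" "0 < u $ k" by (auto simp: u_def elim: nonzero_vec_index)
  have "sr Y \<cdot>\<^sub>v u \<le> Y *\<^sub>v u"
    using eigenvector_norm_subinvariant[OF Y nn ev] \<mu> by (simp add: u_def)
  from positive_mat_subinvariant_eq[OF Y pos u k this]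
  have eq: "Y *\<^sub>v u = sr Y \<cdot>\<^sub>v u" .
  have "0 < u $ i" if i: "i < n" for i
  proof -
    have "0 < sr Y * u $ i" using positive_mat_mult_vec_pos[OF Y pos u k i] eq i u(1) by simp
    then show ?thesis using sr_nonneg[OF Y n] u(2) i by (simp add: zero_less_mult_iff)
  qed
  then show ?thesis using that u(1) eq by blast
qed

lemma left_perron_vector_positive_mat:
  assumes M: "M \<in> carrier_mat n n" and n: "n > 0" and pos: "\<forall>i<n. \<forall>j<n. 0 < M $$ (i,j)"
  obtains c where "c \<in> carrier_vec n" "\<forall>j<n. 0 < c $ j" "c $ 0 = 1"
    "transpose_mat M *\<^sub>v c = sr M \<cdot>\<^sub>v c"
proof -
  have MT: "transpose_mat M \<in> carrier_mat n n" "\<forall>i<n. \<forall>j<n. 0 < transpose_mat M $$ (i,j)"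
    using M pos by auto
  obtain u where u: "u \<in> carrier_vec n" "\<forall>i<n. 0 < u $ i" "transpose_mat M *\<^sub>v u = sr M \<cdot>\<^sub>v u"
    using perron_vector_positive_mat[OF MT(1) n MT(2)] sr_transpose[OF M] by metis
  define c where "c = (1 / u $ 0) \<cdot>\<^sub>v u"
  have "transpose_mat M *\<^sub>v c = sr M \<cdot>\<^sub>v c"
    using u mult_mat_vec[OF MT(1) u(1)] by (simp add: c_def smult_smult_assoc mult.commute)
  moreover have "c \<in> carrier_vec n" "\<forall>j<n. 0 < c $ j" "c $ 0 = 1" using u n by (auto simp: c_def)
  ultimately show ?thesis using that by blast
qed

section \<open>The inverse of an identity minus a nonnegative matrix\<close>

lemma nonneg_of_mult_vec_le_self:
  assumes X: "X \<in> carrier_mat n n" and nn: "nonneg_mat X" and sr: "sr X < 1"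
    and x: "x \<in> carrier_vec n" and le: "X *\<^sub>v x \<le> x"
  shows "\<forall>i<n. 0 \<le> x $ i"
proof (rule ccontr)
  assume "\<not> (\<forall>i<n. 0 \<le> x $ i)"
  then obtain i0 where i0: "i0 < n" "x $ i0 < 0" by auto
  \<comment> \<open>the negative part of x is a nonnegative vector y with y \<le> X y\<close>
  define y where "y = vec n (\<lambda>i. max 0 (- x $ i))"
  have y: "y \<in> carrier_vec n" "\<forall>i<n. 0 \<le> y $ i" by (auto simp: y_def)
  have "y $ i \<le> (X *\<^sub>v y) $ i" if i: "i < n" for i
  proof -
    have Xnn: "0 \<le> X $$ (i,k)" if "k < n" for k using nn X i that by (auto simp: nonneg_mat_def)
    have "- x $ i \<le> - (X *\<^sub>v x) $ i" using le x X i by (auto simp: less_eq_vec_iff[of _ n])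
    also have "\<dots> = (\<Sum>k<n. X $$ (i,k) * (- x $ k))"
      by (simp add: index_mult_mat_vec_sum[OF X x i] sum_negf)
    also have "\<dots> \<le> (\<Sum>k<n. X $$ (i,k) * y $ k)"
      by (intro sum_mono mult_left_mono) (auto simp: y_def Xnn)
    also have "\<dots> = (X *\<^sub>v y) $ i" by (rule index_mult_mat_vec_sum[OF X y(1) i, symmetric])
    finally have "- x $ i \<le> (X *\<^sub>v y) $ i" .
    moreover have "0 \<le> (X *\<^sub>v y) $ i"
      by (subst index_mult_mat_vec_sum[OF X y(1) i]) (use Xnn y in \<open>auto intro!: sum_nonneg\<close>)
    ultimately show ?thesis using i by (simp add: y_def)
  qed
  then have "1 \<cdot>\<^sub>v y \<le> X *\<^sub>v y" using X y by (simp add: less_eq_vec_iff[of _ n])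
  from sr_ge_of_mult_vec_ge[OF X nn y(1) y(2) i0(1) _ this] i0 sr show False
    by (simp add: y_def)
qed

lemma one_minus_mat_invertible:
  assumes X: "X \<in> carrier_mat n n" and sr: "sr X < 1"
  obtains N where "mat_inverse (1\<^sub>m n - X) = Some N"
proof -
  have IX: "1\<^sub>m n - X \<in> carrier_mat n n" using X by (auto intro: carrier_matI)
  have "det (1\<^sub>m n - X) \<noteq> 0"
  proof
    assume "det (1\<^sub>m n - X) = 0"
    then obtain v where v: "v \<in> carrier_vec n" "v \<noteq> 0\<^sub>v n" "(1\<^sub>m n - X) *\<^sub>v v = 0\<^sub>v n"
      using det_0_iff_vec_prod_zero[OF IX] by auto
    have "v - X *\<^sub>v v = 0\<^sub>v n"
      using v minus_mult_distrib_mat_vec[OF _ X v(1), of "1\<^sub>m n"] by simp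
    have "X *\<^sub>v v = v"
    proof (rule eq_vecI)
      fix i assume "i < dim_vec v"
      then have i: "i < n" using v(1) by simp
      have "(v - X *\<^sub>v v) $ i = 0" using \<open>v - X *\<^sub>v v = 0\<^sub>v n\<close> i by simp
      then show "(X *\<^sub>v v) $ i = v $ i" using i X by simp
    qed (use X v(1) in simp)
    have "of_real_mat X *\<^sub>v map_vec complex_of_real v = map_vec complex_of_real (X *\<^sub>v v)"
      by (rule of_real_hom.mult_mat_vec_hom[OF X v(1), symmetric])
    also have "\<dots> = 1 \<cdot>\<^sub>v map_vec complex_of_real v"
      unfolding \<open>X *\<^sub>v v = v\<close> by simp
    finally have "of_real_mat X *\<^sub>v map_vec complex_of_real v = 1 \<cdot>\<^sub>v map_vec complex_of_real v" .
    then have "eigenvector (of_real_mat X) (map_vec complex_of_real v) 1"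
      using v X unfolding eigenvector_def by auto
    from eigenvalue_norm_le_sr[OF X this] sr show False by simp
  qed
  then have "1\<^sub>m n - X \<in> Units (ring_mat TYPE(real) n n)" by (rule det_non_zero_imp_unit[OF IX])
  then show ?thesis using that mat_inverse(1)[OF IX, of n] by (cases "mat_inverse (1\<^sub>m n - X)") auto
qed

lemma mult_eq_minus_one_of_left_inverse:
  fixes X N :: "'a :: comm_ring_1 mat"
  assumes X: "X \<in> carrier_mat n n" and N: "N \<in> carrier_mat n n" and inv: "N * (1\<^sub>m n - X) = 1\<^sub>m n"
  shows "N * X = N - 1\<^sub>m n"
proof (rule eq_matI)
  fix i j assume "i < dim_row (N - 1\<^sub>m n)" "j < dim_col (N - 1\<^sub>m n)"
  then have ij: "i < n" "j < n" using N by auto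
  have "(N - N * X) $$ (i,j) = 1\<^sub>m n $$ (i,j)"
    using inv mult_minus_distrib_mat[OF N _ X, of "1\<^sub>m n"] N by simp
  moreover have "(N - N * X) $$ (i,j) = N $$ (i,j) - (N * X) $$ (i,j)" using ij N X by simp
  ultimately show "(N * X) $$ (i,j) = (N - 1\<^sub>m n) $$ (i,j)"
    using ij N by (auto simp: eq_diff_eq diff_eq_eq ac_simps)
qed (use N X in auto)

lemma mult_eq_minus_one_of_right_inverse:
  fixes X N :: "'a :: comm_ring_1 mat"
  assumes X: "X \<in> carrier_mat n n" and N: "N \<in> carrier_mat n n" and inv: "(1\<^sub>m n - X) * N = 1\<^sub>m n"
  shows "X * N = N - 1\<^sub>m n"
proof (rule eq_matI)
  fix i j assume "i < dim_row (N - 1\<^sub>m n)" "j < dim_col (N - 1\<^sub>m n)"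
  then have ij: "i < n" "j < n" using N by auto
  have "(N - X * N) $$ (i,j) = 1\<^sub>m n $$ (i,j)"
    using inv minus_mult_distrib_mat[OF _ X N, of "1\<^sub>m n"] N by simp
  moreover have "(N - X * N) $$ (i,j) = N $$ (i,j) - (X * N) $$ (i,j)" using ij N X by simp
  ultimately show "(X * N) $$ (i,j) = (N - 1\<^sub>m n) $$ (i,j)"
    using ij N by (auto simp: eq_diff_eq diff_eq_eq ac_simps)
qed (use N X in auto)

lemma inverse_one_minus_nonneg:
  assumes X: "X \<in> carrier_mat n n" and nn: "nonneg_mat X" and sr: "sr X < 1"
    and N: "N \<in> carrier_mat n n" and inv: "(1\<^sub>m n - X) * N = 1\<^sub>m n"
  shows "nonneg_mat N"
  unfolding nonneg_mat_def
proof (intro allI impI)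
  fix i j assume "i < dim_row N" "j < dim_col N"
  then have ij: "i < n" "j < n" using N by auto
  have XN: "X * N = N - 1\<^sub>m n" by (rule mult_eq_minus_one_of_right_inverse[OF X N inv])
  have "(X *\<^sub>v col N j) $ k \<le> col N j $ k" if k: "k < n" for k
  proof -
    have "(X *\<^sub>v col N j) $ k = (X * N) $$ (k,j)" using k ij X N by simp
    also have "\<dots> \<le> N $$ (k,j)" using k ij N by (simp add: XN)
    finally show ?thesis using k ij N by simp
  qed
  then have "X *\<^sub>v col N j \<le> col N j" using X N ij by (simp add: less_eq_vec_iff[of _ n])
  from nonneg_of_mult_vec_le_self[OF X nn sr _ this] ij N show "0 \<le> N $$ (i,j)" by simp
qed

lemma inverse_one_minus_positive:
  assumes X: "X \<in> carrier_mat n n" and nn: "nonneg_mat X" and irr: "irreducible_mat X"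
    and sr: "sr X < 1" and N: "N \<in> carrier_mat n n" and inv: "(1\<^sub>m n - X) * N = 1\<^sub>m n"
  shows "\<forall>i<n. \<forall>j<n. 0 < N $$ (i,j)"
proof -
  have Nnn: "nonneg_mat N" by (rule inverse_one_minus_nonneg[OF X nn sr N inv])
  have XN: "X * N = N - 1\<^sub>m n" by (rule mult_eq_minus_one_of_right_inverse[OF X N inv])
  have entry_ge: "X $$ (i,k) * N $$ (k,j) \<le> N $$ (i,j)" if "i < n" "k < n" "j < n" for i k j
  proof -
    have "X $$ (i,k) * N $$ (k,j) \<le> (\<Sum>l<n. X $$ (i,l) * N $$ (l,j))"
      by (rule member_le_sum) (use that nonneg_matD[OF nn X] nonneg_matD[OF Nnn N] in auto)
    also have "\<dots> = (X * N) $$ (i,j)" by (rule index_mult_mat_sum[OF X N that(1,3), symmetric])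
    also have "\<dots> \<le> N $$ (i,j)" using that N by (simp add: XN)
    finally show ?thesis .
  qed
  have diag: "1 \<le> N $$ (j,j)" if "j < n" for j
  proof -
    have "0 \<le> (X * N) $$ (j,j)"
      using nonneg_matD[OF nonneg_mat_mult[OF X N nn Nnn] mult_carrier_mat[OF X N] that that] .
    then show ?thesis using that N by (simp add: XN)
  qed
  define E where "E = {(a,b). a < n \<and> b < n \<and> X $$ (a,b) \<noteq> 0}"
  have Xpos: "0 < X $$ (a,b)" if "(a,b) \<in> E" for a b
    using that nn X by (auto simp: E_def nonneg_mat_def less_le)
  show ?thesis
  proof (intro allI impI)
    fix i j assume ij: "i < n" "j < n"
    have "(i,j) \<in> E\<^sup>+" using irr ij X unfolding irreducible_mat_def E_def by auto
    then show "0 < N $$ (i,j)"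
    proof (induct rule: converse_trancl_induct)
      case (base i)
      then have i: "i < n" by (simp add: E_def)
      have "0 < X $$ (i,j) * N $$ (j,j)" using Xpos[OF base] diag[OF ij(2)] by simp
      also have "\<dots> \<le> N $$ (i,j)" using entry_ge[OF i ij(2) ij(2)] .
      finally show ?case .
    next
      case (step i k)
      then have ik: "i < n" "k < n" by (auto simp: E_def)
      have "0 < X $$ (i,k) * N $$ (k,j)" using Xpos[OF step(1)] step(3) by simp
      also have "\<dots> \<le> N $$ (i,j)" using entry_ge[OF ik ij(2)] .
      finally show ?case .
    qed
  qed
qed

section \<open>The value-feasible domain and the two spectral thresholds\<close>

lemma positive_mat_diag_mult_mult:
  assumes N: "N \<in> carrier_mat n n" and Npos: "\<forall>i<n. \<forall>j<n. 0 < N $$ (i,j)"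
    and B: "B \<in> carrier_mat n n" and nnB: "nonneg_mat B" and Bcol: "\<forall>j<n. \<exists>i<n. B $$ (i,j) \<noteq> 0"
    and l: "\<forall>i<n. 0 < l i"
  shows "\<forall>i<n. \<forall>j<n. 0 < (diag_of n l * N * B) $$ (i,j)"
proof (intro allI impI)
  fix i j assume ij: "i < n" "j < n"
  obtain k where k: "k < n" "B $$ (k,j) \<noteq> 0" using Bcol ij by auto
  have colB: "col B j \<in> carrier_vec n" "\<forall>k<n. 0 \<le> col B j $ k"
    using B ij nonneg_matD[OF nnB B] by auto
  have "0 < col B j $ k" using k nonneg_matD[OF nnB B k(1) ij(2)] B ij by (simp add: less_le)
  then have "0 < (N *\<^sub>v col B j) $ i"
    by (rule positive_mat_mult_vec_pos[OF N Npos colB k(1) _ ij(1)])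
  moreover have "diag_of n l * N * B = mat_diag n l * (N * B)"
    using assoc_mult_mat[OF mat_diag_dim N B] by (simp add: diag_of_eq_mat_diag)
  ultimately show "0 < (diag_of n l * N * B) $$ (i,j)"
    using mat_diag_mult_left[of "N * B" n n l] l ij N B by simp
qed

lemma transpose_one_minus_mult_vec:
  fixes M :: "real mat"
  assumes M: "M \<in> carrier_mat n n" and c: "c \<in> carrier_vec n"
  shows "transpose_mat (1\<^sub>m n - M) *\<^sub>v c = c - transpose_mat M *\<^sub>v c"
proof -
  have I: "1\<^sub>m n \<in> carrier_mat n n" and MT: "transpose_mat M \<in> carrier_mat n n" using M by auto
  have "transpose_mat (1\<^sub>m n - M) *\<^sub>v c = (1\<^sub>m n - transpose_mat M) *\<^sub>v c"
    using transpose_minus[OF I M] by simp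
  also have "\<dots> = 1\<^sub>m n *\<^sub>v c - transpose_mat M *\<^sub>v c"
    by (rule minus_mult_distrib_mat_vec[OF I MT c])
  finally show ?thesis using c by simp
qed

lemma strictly_feasible_iff_sr_less_1:
  assumes M: "M \<in> carrier_mat n n" and n: "n > 0" and pos: "\<forall>i<n. \<forall>j<n. 0 < M $$ (i,j)"
  shows "(\<exists>c. dim_vec c = n \<and> (\<forall>j<n. c $ j > 0) \<and> c $ 0 = 1 \<and>
            (\<forall>j<n. (transpose_mat (1\<^sub>m n - M) *\<^sub>v c) $ j > 0)) \<longleftrightarrow> sr M < 1"
proof
  assume "\<exists>c. dim_vec c = n \<and> (\<forall>j<n. c $ j > 0) \<and> c $ 0 = 1 \<and>
            (\<forall>j<n. (transpose_mat (1\<^sub>m n - M) *\<^sub>v c) $ j > 0)"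
  then obtain c where dc: "dim_vec c = n" and cpos: "\<forall>j<n. 0 < c $ j"
    and gt: "\<forall>j<n. 0 < (transpose_mat (1\<^sub>m n - M) *\<^sub>v c) $ j"
    by blast
  have c: "c \<in> carrier_vec n" using dc by (rule carrier_vecI)
  have MT: "transpose_mat M \<in> carrier_mat n n" "nonneg_mat (transpose_mat M)"
    using M pos by (auto simp: nonneg_mat_def less_imp_le)
  have "(transpose_mat M *\<^sub>v c) $ j < 1 * c $ j" if j: "j < n" for j
  proof -
    have "0 < (c - transpose_mat M *\<^sub>v c) $ j"
      using gt j unfolding transpose_one_minus_mult_vec[OF M c] by blast
    then show ?thesis using j MT(1) c by simp
  qed
  with sr_less_of_mult_vec_less[OF MT n c cpos] show "sr M < 1"
    using sr_transpose[OF M] by simp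
next
  assume lt: "sr M < 1"
  obtain c where c: "c \<in> carrier_vec n" "\<forall>j<n. 0 < c $ j" "c $ 0 = 1"
    "transpose_mat M *\<^sub>v c = sr M \<cdot>\<^sub>v c"
    using left_perron_vector_positive_mat[OF M n pos] by blast
  have "0 < (transpose_mat (1\<^sub>m n - M) *\<^sub>v c) $ j" if j: "j < n" for j
  proof -
    have "(transpose_mat (1\<^sub>m n - M) *\<^sub>v c) $ j = (1 - sr M) * c $ j"
      unfolding transpose_one_minus_mult_vec[OF M c(1)] c(4) using j c(1) by (simp add: left_diff_distrib)
    then show ?thesis using lt c(2) j by simp
  qed
  then show "\<exists>c. dim_vec c = n \<and> (\<forall>j<n. c $ j > 0) \<and> c $ 0 = 1 \<and>
            (\<forall>j<n. (transpose_mat (1\<^sub>m n - M) *\<^sub>v c) $ j > 0)"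
    using c(1-3) carrier_vecD[OF c(1)] by blast
qed

lemma Theta_val_nonempty_iff_sr_le_1:
  assumes M: "M \<in> carrier_mat n n" and n: "n > 0" and pos: "\<forall>i<n. \<forall>j<n. 0 < M $$ (i,j)"
  shows "Theta_val n M \<noteq> {} \<longleftrightarrow> sr M \<le> 1"
proof
  assume "Theta_val n M \<noteq> {}"
  then obtain c where dc: "dim_vec c = n" and cpos: "\<forall>j<n. 0 < c $ j"
    and ge: "\<forall>j<n. 0 \<le> (transpose_mat (1\<^sub>m n - M) *\<^sub>v c) $ j"
    unfolding Theta_val_def by blast
  have c: "c \<in> carrier_vec n" using dc by (rule carrier_vecI)
  have MT: "transpose_mat M \<in> carrier_mat n n" "nonneg_mat (transpose_mat M)"
    using M pos by (auto simp: nonneg_mat_def less_imp_le)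
  have "(transpose_mat M *\<^sub>v c) $ j \<le> (1 \<cdot>\<^sub>v c) $ j" if j: "j < n" for j
  proof -
    have "0 \<le> (c - transpose_mat M *\<^sub>v c) $ j"
      using ge j unfolding transpose_one_minus_mult_vec[OF M c] by blast
    then show ?thesis using j MT(1) c by simp
  qed
  then have "transpose_mat M *\<^sub>v c \<le> 1 \<cdot>\<^sub>v c"
    using MT(1) c by (simp add: less_eq_vec_iff[of _ n])
  from sr_le_of_mult_vec_le[OF MT n c cpos _ this] show "sr M \<le> 1"
    using sr_transpose[OF M] by simp
next
  assume le: "sr M \<le> 1"
  obtain c where c: "c \<in> carrier_vec n" "\<forall>j<n. 0 < c $ j" "c $ 0 = 1"
    "transpose_mat M *\<^sub>v c = sr M \<cdot>\<^sub>v c"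
    using left_perron_vector_positive_mat[OF M n pos] by blast
  have "0 \<le> (transpose_mat (1\<^sub>m n - M) *\<^sub>v c) $ j" if j: "j < n" for j
  proof -
    have "(transpose_mat (1\<^sub>m n - M) *\<^sub>v c) $ j = (1 - sr M) * c $ j"
      unfolding transpose_one_minus_mult_vec[OF M c(1)] c(4) using j c(1) by (simp add: left_diff_distrib)
    moreover have "0 \<le> (1 - sr M) * c $ j"
      using le c(2) j by (intro mult_nonneg_nonneg) (auto intro: less_imp_le)
    ultimately show ?thesis by simp
  qed
  then have "c \<in> Theta_val n M" using c unfolding Theta_val_def by auto
  then show "Theta_val n M \<noteq> {}" by blast
qed

lemma transpose_sum_mult_vec_eq:
  fixes At B L N :: "'a :: comm_ring_1 mat"
  assumes At: "At \<in> carrier_mat n n" and B: "B \<in> carrier_mat n n"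
    and L: "L \<in> carrier_mat n n" "transpose_mat L = L" and N: "N \<in> carrier_mat n n"
    and NAt: "N * At = N - 1\<^sub>m n" and u: "u \<in> carrier_vec n"
  shows "transpose_mat (At + B * L) *\<^sub>v (transpose_mat N *\<^sub>v (L *\<^sub>v u)) =
    transpose_mat N *\<^sub>v (L *\<^sub>v u) - L *\<^sub>v u + L *\<^sub>v (transpose_mat (L * N * B) *\<^sub>v u)"
proof -
  define p where "p = L *\<^sub>v u"
  define x where "x = transpose_mat N *\<^sub>v p"
  have p: "p \<in> carrier_vec n" and x: "x \<in> carrier_vec n" using L(1) N u by (auto simp: p_def x_def)
  have AtT: "transpose_mat At \<in> carrier_mat n n" and BT: "transpose_mat B \<in> carrier_mat n n"
    and NT: "transpose_mat N \<in> carrier_mat n n" using At B N by auto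
  have "transpose_mat At *\<^sub>v x = transpose_mat (N * At) *\<^sub>v p"
    using assoc_mult_mat_vec[OF AtT NT p] transpose_mult[OF N At] by (simp add: x_def)
  also have "\<dots> = (transpose_mat N - 1\<^sub>m n) *\<^sub>v p"
    unfolding NAt using transpose_minus[OF N, of "1\<^sub>m n"] by simp
  also have "\<dots> = x - p"
    using minus_mult_distrib_mat_vec[OF NT _ p, of "1\<^sub>m n"] p by (simp add: x_def)
  finally have At_x: "transpose_mat At *\<^sub>v x = x - p" .
  have "transpose_mat B *\<^sub>v x = (transpose_mat B * (transpose_mat N * L)) *\<^sub>v u"
    using assoc_mult_mat_vec[OF NT L(1) u] assoc_mult_mat_vec[OF BT mult_carrier_mat[OF NT L(1)] u]
    by (simp add: x_def p_def)
  also have "transpose_mat B * (transpose_mat N * L) = transpose_mat (L * N * B)"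
    using transpose_mult[OF mult_carrier_mat[OF L(1) N] B] transpose_mult[OF L(1) N] L(2) by simp
  finally have B_x: "transpose_mat B *\<^sub>v x = transpose_mat (L * N * B) *\<^sub>v u" .
  have "transpose_mat (At + B * L) = transpose_mat At + L * transpose_mat B"
    using At B L by (simp add: transpose_add transpose_mult)
  then have "transpose_mat (At + B * L) *\<^sub>v x = transpose_mat At *\<^sub>v x + L *\<^sub>v (transpose_mat B *\<^sub>v x)"
    using add_mult_distrib_mat_vec[OF AtT mult_carrier_mat[OF L(1) BT] x]
      assoc_mult_mat_vec[OF L(1) BT x] by simp
  then show ?thesis unfolding At_x B_x by (simp add: x_def p_def)
qed

lemma sr_thresholds_coincide:
  assumes At: "At \<in> carrier_mat n n" "nonneg_mat At"
    and B: "B \<in> carrier_mat n n" "nonneg_mat B" and l: "\<forall>i<n. 0 < l i" and n: "n > 0"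
    and N: "N \<in> carrier_mat n n" "\<forall>i<n. \<forall>j<n. 0 < N $$ (i,j)" and inv: "N * (1\<^sub>m n - At) = 1\<^sub>m n"
    and M: "M = diag_of n l * N * B" and Mpos: "\<forall>i<n. \<forall>j<n. 0 < M $$ (i,j)"
  shows "(sr M < 1 \<longleftrightarrow> sr (At + B * diag_of n l) < 1) \<and>
         (sr M \<le> 1 \<longleftrightarrow> sr (At + B * diag_of n l) \<le> 1)"
proof -
  define L where "L = diag_of n l"
  define T where "T = transpose_mat (At + B * L)"
  have L: "L \<in> carrier_mat n n" "nonneg_mat L" "transpose_mat L = L"
    using l nonneg_mat_diag_of[of n l] by (auto simp: L_def transpose_diag_of less_imp_le)
  have Mc: "M \<in> carrier_mat n n" using L(1) N(1) B(1) by (simp add: M L_def[symmetric])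
  have "At + B * L \<in> carrier_mat n n" "nonneg_mat (At + B * L)"
    using At B L nonneg_mat_add[OF At(1) _ At(2) nonneg_mat_mult[OF B(1) L(1) B(2) L(2)]] by auto
  then have T: "T \<in> carrier_mat n n" "nonneg_mat T" "sr T = sr (At + B * L)"
    using sr_transpose nonneg_mat_transpose by (auto simp: T_def)
  obtain u where u: "u \<in> carrier_vec n" "\<forall>j<n. 0 < u $ j" "transpose_mat M *\<^sub>v u = sr M \<cdot>\<^sub>v u"
    using left_perron_vector_positive_mat[OF Mc n Mpos] by metis
  \<comment> \<open>the left vector x = u L N of At + B L is shifted by (sr M - 1) u L\<close>
  define x where "x = transpose_mat N *\<^sub>v (L *\<^sub>v u)"
  have Lu: "L *\<^sub>v u \<in> carrier_vec n" "\<forall>j<n. (L *\<^sub>v u) $ j = l j * u $ j" "\<forall>j<n. 0 < l j * u $ j"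
    using mult_mat_vec_carrier[OF L(1) u(1)] diag_of_mult_vec_index[OF u(1)] u(2) l
    by (auto simp: L_def)
  have x: "x \<in> carrier_vec n" "\<forall>j<n. 0 < x $ j"
    using positive_mat_mult_vec_pos[of "transpose_mat N" n "L *\<^sub>v u" 0] N Lu n
    by (auto simp: x_def less_imp_le)
  have "T *\<^sub>v x = x - L *\<^sub>v u + L *\<^sub>v (sr M \<cdot>\<^sub>v u)"
    using transpose_sum_mult_vec_eq[OF At(1) B(1) L(1,3) N(1)
        mult_eq_minus_one_of_left_inverse[OF At(1) N(1) inv] u(1)] u(3)
    by (simp add: T_def x_def M L_def[symmetric])
  then have "(T *\<^sub>v x) $ j = x $ j + (sr M - 1) * (l j * u $ j)" if j: "j < n" for j
    using mult_mat_vec[OF L(1) u(1)] Lu j x(1) carrier_vecD[OF Lu(1)] by (simp add: algebra_simps)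
  with sr_compare_one_of_mult_vec_shift[OF T(1,2) n x Lu(3)] T(3)
  show ?thesis by (simp add: L_def)
qed

theorem mainTheorem3:
  fixes n :: nat and A K B :: "real mat" and \<delta> l :: "nat \<Rightarrow> real"
  assumes n2: "n \<ge> 2"
    and A: "A \<in> carrier_mat n n" and K: "K \<in> carrier_mat n n" and B: "B \<in> carrier_mat n n"
    and nnA: "nonneg_mat A" and nnK: "nonneg_mat K" and nnB: "nonneg_mat B"
    and delta: "\<forall>j<n. 0 < \<delta> j \<and> \<delta> j \<le> 1"
    and lpos: "\<forall>j<n. l j > 0"
    and Bcol: "\<forall>j<n. \<exists>i<n. B $$ (i,j) \<noteq> 0"
    and irr: "irreducible_mat (A + K * diag_of n \<delta>)"
    and sr_lt: "sr (A + K * diag_of n \<delta>) < 1"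
  defines "At \<equiv> A + K * diag_of n \<delta>"
    and "L \<equiv> diag_of n l"
    and "M0 \<equiv> M0_of n (diag_of n l) (A + K * diag_of n \<delta>) B"
  shows "((\<exists>c. dim_vec c = n \<and> (\<forall>j<n. c $ j > 0) \<and> c $ 0 = 1 \<and>
              (\<forall>j<n. (transpose_mat (1\<^sub>m n - M0) *\<^sub>v c) $ j > 0))
           \<longleftrightarrow> sr M0 < 1)
       \<and> (sr M0 < 1 \<longleftrightarrow> sr (At + B * L) < 1)
       \<and> (Theta_val n M0 \<noteq> {} \<longleftrightarrow> sr M0 \<le> 1)
       \<and> (sr M0 \<le> 1 \<longleftrightarrow> sr (At + B * L) \<le> 1)"
proof -
  have n: "n > 0" using n2 by simp
  have D: "diag_of n \<delta> \<in> carrier_mat n n" "nonneg_mat (diag_of n \<delta>)"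
    using delta nonneg_mat_diag_of[of n \<delta>] by (auto simp: less_imp_le)
  have At: "At \<in> carrier_mat n n" "nonneg_mat At"
    using A K D nonneg_mat_add[OF A _ nnA nonneg_mat_mult[OF K D(1) nnK D(2)]] by (auto simp: At_def)
  obtain N where inv: "mat_inverse (1\<^sub>m n - At) = Some N"
    using one_minus_mat_invertible[OF At(1)] sr_lt unfolding At_def by blast
  have "1\<^sub>m n - At \<in> carrier_mat n n" using At(1) by (auto intro: carrier_matI)
  from mat_inverse(2)[OF this inv]
  have N: "N \<in> carrier_mat n n" "(1\<^sub>m n - At) * N = 1\<^sub>m n" "N * (1\<^sub>m n - At) = 1\<^sub>m n"
    by auto
  have Npos: "\<forall>i<n. \<forall>j<n. 0 < N $$ (i,j)"
    using inverse_one_minus_positive[OF At] irr sr_lt N(1,2) unfolding At_def by blast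
  have M0: "M0 = diag_of n l * N * B"
    using inv unfolding M0_def M0_of_def At_def by simp
  have M0c: "M0 \<in> carrier_mat n n"
    using mult_carrier_mat[OF mult_carrier_mat[OF diag_of_carrier N(1)] B] by (simp add: M0)
  have M0pos: "\<forall>i<n. \<forall>j<n. 0 < M0 $$ (i,j)"
    unfolding M0 by (rule positive_mat_diag_mult_mult[OF N(1) Npos B nnB Bcol lpos])
  show ?thesis
    using strictly_feasible_iff_sr_less_1[OF M0c n M0pos] Theta_val_nonempty_iff_sr_le_1[OF M0c n M0pos]
      sr_thresholds_coincide[OF At B nnB lpos n N(1) Npos N(3) M0 M0pos]
    unfolding L_def by blast
qed

end
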